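(* For either choice $\zeta\in\{q,-q^3\}$, the partition function $\mathcal{Z}(\lambda_1,\dots,\lambda_L)=\langle\bar0|\mathcal{E}(\lambda_L)\cdots\mathcal{E}(\lambda_1)|0\rangle$ satisfies, at the specialization $\lambda_i=\mu_i$ for $1\le i\le L$, $$\mathcal{Z}(\mu_1,\mu_2,\dots,\mu_L)=\prod_{i,j=1}^L a(\mu_i-\mu_j).$$
   Context: Let $q\in\mathbb{C}\setminus\{0\}$ (with a fixed choice of $q^{1/2}$) and $\zeta\in\{q,-q^3\}$ ($\zeta=q$: Fateev–Zamolodchikov model; $\zeta=-q^3$: Izergin–Korepin model). For $\lambda\in\mathbb{C}$ put $x=e^{2\lambda}$ and define $a(\lambda)=(x-\zeta)(x-q^2)$, $b(\lambda)=q(x-1)(x-\zeta)$, $c(\lambda)=(1-q^2)(x-\zeta)$, $\bar c(\lambda)=x(1-q^2)(x-\zeta)$, and for $\alpha,\beta\in\{1,2,3\}$, with $\beta'=4-\beta$: $d_{\alpha,\beta}(\lambda)=q(x-1)(x-\zeta)+x(q^2-1)(\zeta-1)$ if $\alpha=\beta=2$; $d_{\alpha,\beta}(\lambda)=(x-1)[(x-\zeta)+x(q^2-1)]$ if $\alpha=\beta\neq 2$; $d_{\alpha,\beta}(\lambda)=(q^2-1)[\zeta(x-1)q^{(\alpha-\beta)/2}-\delta_{\alpha,\beta'}(x-\zeta)]$ if $\alpha<\beta$; $d_{\alpha,\beta}(\lambda)=x(q^2-1)[(x-1)q^{(\alpha-\beta)/2}-\delta_{\alpha,\beta'}(x-\zeta)]$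 if $\alpha>\beta$. Let $e_1,e_2,e_3$ be the standard basis of $\mathbb{C}^3$ and $E_{\alpha,\beta}$ the unit matrices. Define $\mathcal{R}(\lambda)\in\mathrm{End}(\mathbb{C}^3\otimes\mathbb{C}^3)$ as the $9\times 9$ matrix in the ordered basis $e_1\otimes e_1,e_1\otimes e_2,e_1\otimes e_3,e_2\otimes e_1,e_2\otimes e_2,e_2\otimes e_3,e_3\otimes e_1,e_3\otimes e_2,e_3\otimes e_3$ (indices $1,\dots,9$) whose only nonzero entries (row, column) are: $(1,1)=a$; $(2,2)=b$, $(2,4)=c$; $(3,3)=d_{1,1}$, $(3,5)=d_{1,2}$, $(3,7)=d_{1,3}$; $(4,2)=\bar c$, $(4,4)=b$; $(5,3)=d_{2,1}$, $(5,5)=d_{2,2}$, $(5,7)=d_{2,3}$; $(6,6)=b$, $(6,8)=c$; $(7,3)=d_{3,1}$, $(7,5)=d_{3,2}$, $(7,7)=d_{3,3}$; $(8,6)=\bar c$, $(8,8)=b$; $(9,9)=a$ (all evaluated at $\lambda$). Fix $L\ge1$ and inhomogeneities $\mu_1,\dots,\mu_L\in\mathbb{C}$. With $V_a=V_1=\dots=V_L=\mathbb{C}^3$, let $\mathcal{T}(\lambda)=\mathcal{R}_{a1}(\lambda-\mu_1)\cdots\mathcal{R}_{aL}(\lambda-\mu_L)$, where $\mathcal{R}_{aj}$ acts as $\mathcal{R}$ on $V_a\otimes V_j$. Write $\mathcal{T}(\lambda)=\sum_{\alpha,\beta}E_{\alpha,\beta}\otimes\mathcal{T}_\alpha^\beta(\lambda)$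 and set $\mathcal{E}(\lambda)=\mathcal{T}_1^3(\lambda)$, an operator on $V_1\otimes\cdots\otimes V_L$. Let $|0\rangle=e_1^{\otimes L}$ and let $\langle\bar0|$ be the dual vector of $e_3^{\otimes L}$. *)

theory Defs
  imports Complex_Main
begin

text \<open>Parameters: q, a fixed square root s of q (so q powi (k/2) is s powi k), and zeta.
  The spectral variable is x = exp(2 lambda).\<close>

definition wa :: "complex \<Rightarrow> complex \<Rightarrow> complex \<Rightarrow> complex" where
  "wa q z l = (let x = exp (2 * l) in (x - z) * (x - q^2))"

definition wb :: "complex \<Rightarrow> complex \<Rightarrow> complex \<Rightarrow> complex" where
  "wb q z l = (let x = exp (2 * l) in q * (x - 1) * (x - z))"

definition wc :: "complex \<Rightarrow> complex \<Rightarrow> complex \<Rightarrow> complex" where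
  "wc q z l = (let x = exp (2 * l) in (1 - q^2) * (x - z))"

definition wcb :: "complex \<Rightarrow> complex \<Rightarrow> complex \<Rightarrow> complex" where
  "wcb q z l = (let x = exp (2 * l) in x * (1 - q^2) * (x - z))"

text \<open>d_{alpha,beta}; q^((alpha-beta)/2) is s powi (alpha - beta); beta' = 4 - beta.\<close>
definition wd :: "complex \<Rightarrow> complex \<Rightarrow> complex \<Rightarrow> nat \<Rightarrow> nat \<Rightarrow> complex \<Rightarrow> complex" where
  "wd q s z \<alpha> \<beta> l = (let x = exp (2 * l);
      h = s powi (int \<alpha> - int \<beta>);
      \<delta> = (if \<alpha> = 4 - \<beta> then 1 else 0) in
    if \<alpha> = \<beta> \<and> \<alpha> = 2 then q * (x - 1) * (x - z) + x * (q^2 - 1) * (z - 1)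
    else if \<alpha> = \<beta> then (x - 1) * ((x - z) + x * (q^2 - 1))
    else if \<alpha> < \<beta> then (q^2 - 1) * (z * (x - 1) * h - \<delta> * (x - z))
    else x * (q^2 - 1) * ((x - 1) * h - \<delta> * (x - z)))"

definition Rmat :: "complex \<Rightarrow> complex \<Rightarrow> complex \<Rightarrow> complex \<Rightarrow> nat \<Rightarrow> nat \<Rightarrow> complex" where
  "Rmat q s z l r c =
    (if (r, c) = (1, 1) then wa q z l
     else if (r, c) = (2, 2) then wb q z l
     else if (r, c) = (2, 4) then wc q z l
     else if (r, c) = (3, 3) then wd q s z 1 1 l
     else if (r, c) = (3, 5) then wd q s z 1 2 l
     else if (r, c) = (3, 7) then wd q s z 1 3 l
     else if (r, c) = (4, 2) then wcb q z l
     else if (r, c) = (4, 4) then wb q z l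
     else if (r, c) = (5, 3) then wd q s z 2 1 l
     else if (r, c) = (5, 5) then wd q s z 2 2 l
     else if (r, c) = (5, 7) then wd q s z 2 3 l
     else if (r, c) = (6, 6) then wb q z l
     else if (r, c) = (6, 8) then wc q z l
     else if (r, c) = (7, 3) then wd q s z 3 1 l
     else if (r, c) = (7, 5) then wd q s z 3 2 l
     else if (r, c) = (7, 7) then wd q s z 3 3 l
     else if (r, c) = (8, 6) then wcb q z l
     else if (r, c) = (8, 8) then wb q z l
     else if (r, c) = (9, 9) then wa q z l
     else 0)"

text \<open>Matrix element <e_alpha (x) e_i | R | e_beta (x) e_j>, alpha,i,beta,j in {1,2,3}.\<close>
definition Rloc :: "complex \<Rightarrow> complex \<Rightarrow> complex \<Rightarrow> complex \<Rightarrow> nat \<Rightarrow> nat \<Rightarrow> nat \<Rightarrow> nat \<Rightarrow> complex" where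
  "Rloc q s z l \<alpha> i \<beta> j = Rmat q s z l (3 * (\<alpha> - 1) + i) (3 * (\<beta> - 1) + j)"

text \<open>Basis states of V_1 (x) ... (x) V_L: lists of length L with entries in {1,2,3}.\<close>
definition states :: "nat \<Rightarrow> nat list set" where
  "states L = {xs. set xs \<subseteq> {1, 2, 3} \<and> length xs = L}"

text \<open>Tmono q s z l mus alpha beta is js is the matrix element <is| T_alpha^beta(l) |js> of the
  monodromy T(l) = R_{a1}(l - mu_1) ... R_{aL}(l - mu_L), mus = [mu_1, ..., mu_L]
  (the ordered product written out over the auxiliary-space indices).\<close>
fun Tmono :: "complex \<Rightarrow> complex \<Rightarrow> complex \<Rightarrow> complex \<Rightarrow> complex list \<Rightarrow> nat \<Rightarrow> nat \<Rightarrow>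
    nat list \<Rightarrow> nat list \<Rightarrow> complex" where
  "Tmono q s z l [] \<alpha> \<beta> is js = (if \<alpha> = \<beta> \<and> is = [] \<and> js = [] then 1 else 0)"
| "Tmono q s z l (\<mu> # mus) \<alpha> \<beta> (i # is) (j # js) =
     (\<Sum>\<gamma>\<in>{1, 2, 3}. Rloc q s z (l - \<mu>) \<alpha> i \<gamma> j * Tmono q s z l mus \<gamma> \<beta> is js)"
| "Tmono q s z l (\<mu> # mus) \<alpha> \<beta> _ _ = 0"

definition Eop :: "complex \<Rightarrow> complex \<Rightarrow> complex \<Rightarrow> complex list \<Rightarrow> complex \<Rightarrow> nat list \<Rightarrow> nat list \<Rightarrow> complex" where
  "Eop q s z mus l is js = Tmono q s z l mus 1 3 is js"

definition applyE :: "complex \<Rightarrow> complex \<Rightarrow> complex \<Rightarrow> complex list \<Rightarrow> complex \<Rightarrow>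
    (nat list \<Rightarrow> complex) \<Rightarrow> nat list \<Rightarrow> complex" where
  "applyE q s z mus l v = (\<lambda>is. \<Sum>js\<in>states (length mus). Eop q s z mus l is js * v js)"

text \<open>Z(lams) = <bar 0| E(lambda_L) ... E(lambda_1) |0>, lams = [lambda_1, ..., lambda_L].\<close>
definition Zpf :: "complex \<Rightarrow> complex \<Rightarrow> complex \<Rightarrow> complex list \<Rightarrow> complex list \<Rightarrow> complex" where
  "Zpf q s z mus lams =
    foldl (\<lambda>v l. applyE q s z mus l v)
          (\<lambda>js. if js = replicate (length mus) 1 then 1 else 0) lams
          (replicate (length mus) 3)"

end

theory Submission
  imports Defs
begin

text \<open>For both choices of \<open>\<zeta>\<close> the R-matrix satisfies the Yang--Baxter equation (a polynomial
  identity once \<open>R\<close> is homogenized), so the monodromy matrix satisfies the RTT relation. Its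
  \<open>(1,1) \<rightarrow> (3,3)\<close> component reads \<open>a(\<lambda> - \<mu>) [E(\<lambda>), E(\<mu>)] = 0\<close>; as \<open>a(\<lambda> - \<mu>)\<close> vanishes only on a
  discrete set of \<open>\<lambda>\<close>, continuity gives \<open>[E(\<lambda>), E(\<mu>)] = 0\<close>, so \<open>E(\<mu>\<^sub>L)\<close> may be applied first.
  At \<open>\<lambda> = \<mu>\<^sub>k\<close> the regularity \<open>R(0) = a(0) P\<close>, together with \<open>R (e\<^sub>c \<otimes> e\<^sub>c) = a e\<^sub>c \<otimes> e\<^sub>c\<close> for
  \<open>c \<in> {1,3}\<close>, freezes the monodromy: \<open>E(\<mu>\<^sub>k)\<close> maps \<open>|1\<^sup>k 3\<^sup>L\<^sup>-\<^sup>k\<rangle>\<close> to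
  \<open>\<Prod>\<^sub>j a(\<mu>\<^sub>k - \<mu>\<^sub>j) |1\<^sup>k\<^sup>-\<^sup>1 3\<^sup>L\<^sup>-\<^sup>k\<^sup>+\<^sup>1\<rangle>\<close>. Multiplying the \<open>L\<close> factors gives the formula.\<close>

section \<open>Yang--Baxter equation\<close>

text \<open>\<open>Rhom_mat q z w1 w2 s X Y\<close> is \<open>Y\<^sup>2 R(X/Y)\<close> (in the variable \<open>x = X/Y\<close>), with \<open>w1\<close>, \<open>w2\<close>
  standing for \<open>z/s\<close>, \<open>z/s\<^sup>2\<close>, so that all entries are polynomials in the parameters and the
  Yang--Baxter equation becomes a polynomial identity.\<close>

definition Rhom_mat :: "complex \<Rightarrow> complex \<Rightarrow> complex \<Rightarrow> complex \<Rightarrow> complex \<Rightarrow> complex \<Rightarrow> complex \<Rightarrow>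
    nat \<Rightarrow> nat \<Rightarrow> complex" where
  "Rhom_mat q z w1 w2 s X Y r c =
    (if (r, c) = (1, 1) then (X - z*Y) * (X - q^2*Y)
     else if (r, c) = (2, 2) then q * (X - Y) * (X - z*Y)
     else if (r, c) = (2, 4) then (1 - q^2) * (X - z*Y) * Y
     else if (r, c) = (3, 3) then (X - Y) * ((X - z*Y) + X * (q^2 - 1))
     else if (r, c) = (3, 5) then (q^2 - 1) * w1 * (X - Y) * Y
     else if (r, c) = (3, 7) then (q^2 - 1) * (w2 * (X - Y) - (X - z*Y)) * Y
     else if (r, c) = (4, 2) then X * (1 - q^2) * (X - z*Y)
     else if (r, c) = (4, 4) then q * (X - Y) * (X - z*Y)
     else if (r, c) = (5, 3) then X * (q^2 - 1) * (X - Y) * s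
     else if (r, c) = (5, 5) then q * (X - Y) * (X - z*Y) + X * Y * (q^2 - 1) * (z - 1)
     else if (r, c) = (5, 7) then (q^2 - 1) * w1 * (X - Y) * Y
     else if (r, c) = (6, 6) then q * (X - Y) * (X - z*Y)
     else if (r, c) = (6, 8) then (1 - q^2) * (X - z*Y) * Y
     else if (r, c) = (7, 3) then X * (q^2 - 1) * ((X - Y) * s^2 - (X - z*Y))
     else if (r, c) = (7, 5) then X * (q^2 - 1) * (X - Y) * s
     else if (r, c) = (7, 7) then (X - Y) * ((X - z*Y) + X * (q^2 - 1))
     else if (r, c) = (8, 6) then X * (1 - q^2) * (X - z*Y)
     else if (r, c) = (8, 8) then q * (X - Y) * (X - z*Y)
     else if (r, c) = (9, 9) then (X - z*Y) * (X - q^2*Y)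
     else 0)"

definition Rhom :: "complex \<Rightarrow> complex \<Rightarrow> complex \<Rightarrow> complex \<Rightarrow> complex \<Rightarrow> complex \<Rightarrow> complex \<Rightarrow>
    nat \<Rightarrow> nat \<Rightarrow> nat \<Rightarrow> nat \<Rightarrow> complex" where
  "Rhom q z w1 w2 s X Y \<alpha> i \<beta> j = Rhom_mat q z w1 w2 s X Y (3 * (\<alpha> - 1) + i) (3 * (\<beta> - 1) + j)"

text \<open>All 81 entries as ground rewrite rules: evaluating the \<open>if\<close>-chain of \<open>Rhom_mat\<close> afresh in each
  of the 729 component identities of the Yang--Baxter equation is far slower.\<close>
lemma Rhom_entries:
  "Rhom q z w1 w2 s X Y 1 1 1 1 = (X - z*Y) * (X - q^2*Y)"
  "Rhom q z w1 w2 s X Y 1 1 1 2 = 0"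
  "Rhom q z w1 w2 s X Y 1 1 1 3 = 0"
  "Rhom q z w1 w2 s X Y 1 1 2 1 = 0"
  "Rhom q z w1 w2 s X Y 1 1 2 2 = 0"
  "Rhom q z w1 w2 s X Y 1 1 2 3 = 0"
  "Rhom q z w1 w2 s X Y 1 1 3 1 = 0"
  "Rhom q z w1 w2 s X Y 1 1 3 2 = 0"
  "Rhom q z w1 w2 s X Y 1 1 3 3 = 0"
  "Rhom q z w1 w2 s X Y 1 2 1 1 = 0"
  "Rhom q z w1 w2 s X Y 1 2 1 2 = q * (X - Y) * (X - z*Y)"
  "Rhom q z w1 w2 s X Y 1 2 1 3 = 0"
  "Rhom q z w1 w2 s X Y 1 2 2 1 = (1 - q^2) * (X - z*Y) * Y"
  "Rhom q z w1 w2 s X Y 1 2 2 2 = 0"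
  "Rhom q z w1 w2 s X Y 1 2 2 3 = 0"
  "Rhom q z w1 w2 s X Y 1 2 3 1 = 0"
  "Rhom q z w1 w2 s X Y 1 2 3 2 = 0"
  "Rhom q z w1 w2 s X Y 1 2 3 3 = 0"
  "Rhom q z w1 w2 s X Y 1 3 1 1 = 0"
  "Rhom q z w1 w2 s X Y 1 3 1 2 = 0"
  "Rhom q z w1 w2 s X Y 1 3 1 3 = (X - Y) * ((X - z*Y) + X * (q^2 - 1))"
  "Rhom q z w1 w2 s X Y 1 3 2 1 = 0"
  "Rhom q z w1 w2 s X Y 1 3 2 2 = (q^2 - 1) * w1 * (X - Y) * Y"
  "Rhom q z w1 w2 s X Y 1 3 2 3 = 0"
  "Rhom q z w1 w2 s X Y 1 3 3 1 = (q^2 - 1) * (w2 * (X - Y) - (X - z*Y)) * Y"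
  "Rhom q z w1 w2 s X Y 1 3 3 2 = 0"
  "Rhom q z w1 w2 s X Y 1 3 3 3 = 0"
  "Rhom q z w1 w2 s X Y 2 1 1 1 = 0"
  "Rhom q z w1 w2 s X Y 2 1 1 2 = X * (1 - q^2) * (X - z*Y)"
  "Rhom q z w1 w2 s X Y 2 1 1 3 = 0"
  "Rhom q z w1 w2 s X Y 2 1 2 1 = q * (X - Y) * (X - z*Y)"
  "Rhom q z w1 w2 s X Y 2 1 2 2 = 0"
  "Rhom q z w1 w2 s X Y 2 1 2 3 = 0"
  "Rhom q z w1 w2 s X Y 2 1 3 1 = 0"
  "Rhom q z w1 w2 s X Y 2 1 3 2 = 0"
  "Rhom q z w1 w2 s X Y 2 1 3 3 = 0"
  "Rhom q z w1 w2 s X Y 2 2 1 1 = 0"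
  "Rhom q z w1 w2 s X Y 2 2 1 2 = 0"
  "Rhom q z w1 w2 s X Y 2 2 1 3 = X * (q^2 - 1) * (X - Y) * s"
  "Rhom q z w1 w2 s X Y 2 2 2 1 = 0"
  "Rhom q z w1 w2 s X Y 2 2 2 2 = q * (X - Y) * (X - z*Y) + X * Y * (q^2 - 1) * (z - 1)"
  "Rhom q z w1 w2 s X Y 2 2 2 3 = 0"
  "Rhom q z w1 w2 s X Y 2 2 3 1 = (q^2 - 1) * w1 * (X - Y) * Y"
  "Rhom q z w1 w2 s X Y 2 2 3 2 = 0"
  "Rhom q z w1 w2 s X Y 2 2 3 3 = 0"
  "Rhom q z w1 w2 s X Y 2 3 1 1 = 0"
  "Rhom q z w1 w2 s X Y 2 3 1 2 = 0"
  "Rhom q z w1 w2 s X Y 2 3 1 3 = 0"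
  "Rhom q z w1 w2 s X Y 2 3 2 1 = 0"
  "Rhom q z w1 w2 s X Y 2 3 2 2 = 0"
  "Rhom q z w1 w2 s X Y 2 3 2 3 = q * (X - Y) * (X - z*Y)"
  "Rhom q z w1 w2 s X Y 2 3 3 1 = 0"
  "Rhom q z w1 w2 s X Y 2 3 3 2 = (1 - q^2) * (X - z*Y) * Y"
  "Rhom q z w1 w2 s X Y 2 3 3 3 = 0"
  "Rhom q z w1 w2 s X Y 3 1 1 1 = 0"
  "Rhom q z w1 w2 s X Y 3 1 1 2 = 0"
  "Rhom q z w1 w2 s X Y 3 1 1 3 = X * (q^2 - 1) * ((X - Y) * s^2 - (X - z*Y))"
  "Rhom q z w1 w2 s X Y 3 1 2 1 = 0"
  "Rhom q z w1 w2 s X Y 3 1 2 2 = X * (q^2 - 1) * (X - Y) * s"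
  "Rhom q z w1 w2 s X Y 3 1 2 3 = 0"
  "Rhom q z w1 w2 s X Y 3 1 3 1 = (X - Y) * ((X - z*Y) + X * (q^2 - 1))"
  "Rhom q z w1 w2 s X Y 3 1 3 2 = 0"
  "Rhom q z w1 w2 s X Y 3 1 3 3 = 0"
  "Rhom q z w1 w2 s X Y 3 2 1 1 = 0"
  "Rhom q z w1 w2 s X Y 3 2 1 2 = 0"
  "Rhom q z w1 w2 s X Y 3 2 1 3 = 0"
  "Rhom q z w1 w2 s X Y 3 2 2 1 = 0"
  "Rhom q z w1 w2 s X Y 3 2 2 2 = 0"
  "Rhom q z w1 w2 s X Y 3 2 2 3 = X * (1 - q^2) * (X - z*Y)"
  "Rhom q z w1 w2 s X Y 3 2 3 1 = 0"
  "Rhom q z w1 w2 s X Y 3 2 3 2 = q * (X - Y) * (X - z*Y)"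
  "Rhom q z w1 w2 s X Y 3 2 3 3 = 0"
  "Rhom q z w1 w2 s X Y 3 3 1 1 = 0"
  "Rhom q z w1 w2 s X Y 3 3 1 2 = 0"
  "Rhom q z w1 w2 s X Y 3 3 1 3 = 0"
  "Rhom q z w1 w2 s X Y 3 3 2 1 = 0"
  "Rhom q z w1 w2 s X Y 3 3 2 2 = 0"
  "Rhom q z w1 w2 s X Y 3 3 2 3 = 0"
  "Rhom q z w1 w2 s X Y 3 3 3 1 = 0"
  "Rhom q z w1 w2 s X Y 3 3 3 2 = 0"
  "Rhom q z w1 w2 s X Y 3 3 3 3 = (X - z*Y) * (X - q^2*Y)"
  by (simp_all add: Rhom_def Rhom_mat_def)

lemma sum_123: "(\<Sum>g\<in>{1,2,3::nat}. f g) = f 1 + f 2 + f 3"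
  by (simp add: add.assoc)

lemma ball_123: "(\<forall>g\<in>{1,2,3::nat}. P g) \<longleftrightarrow> P 1 \<and> P 2 \<and> P 3"
  by simp

definition yang_baxter ::
    "(nat \<Rightarrow> nat \<Rightarrow> nat \<Rightarrow> nat \<Rightarrow> complex) \<Rightarrow> (nat \<Rightarrow> nat \<Rightarrow> nat \<Rightarrow> nat \<Rightarrow> complex) \<Rightarrow>
     (nat \<Rightarrow> nat \<Rightarrow> nat \<Rightarrow> nat \<Rightarrow> complex) \<Rightarrow> bool" where
  "yang_baxter R12 R13 R23 \<longleftrightarrow>
    (\<forall>a\<in>{1,2,3}. \<forall>a'\<in>{1,2,3}. \<forall>i\<in>{1,2,3}. \<forall>b\<in>{1,2,3}. \<forall>b'\<in>{1,2,3}. \<forall>k\<in>{1,2,3}.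
      (\<Sum>g\<in>{1,2,3}. \<Sum>g'\<in>{1,2,3}. \<Sum>j\<in>{1,2,3}. R12 a a' g g' * R13 g i b j * R23 g' j b' k) =
      (\<Sum>g\<in>{1,2,3}. \<Sum>g'\<in>{1,2,3}. \<Sum>j\<in>{1,2,3}. R23 a' i g' j * R13 a j g k * R12 g g' b b'))"

lemma yang_baxterD:
  assumes "yang_baxter R12 R13 R23"
    and "a \<in> {1,2,3}" "a' \<in> {1,2,3}" "i \<in> {1,2,3}" "b \<in> {1,2,3}" "b' \<in> {1,2,3}" "k \<in> {1,2,3}"
  shows "(\<Sum>g\<in>{1,2,3}. \<Sum>g'\<in>{1,2,3}. \<Sum>j\<in>{1,2,3}. R12 a a' g g' * R13 g i b j * R23 g' j b' k) =
    (\<Sum>g\<in>{1,2,3}. \<Sum>g'\<in>{1,2,3}. \<Sum>j\<in>{1,2,3}. R23 a' i g' j * R13 a j g k * R12 g g' b b')"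
  using assms unfolding yang_baxter_def by blast

lemma yang_baxter_Rhom_FZ:
  fixes s X Y :: complex
  defines "R \<equiv> Rhom (s^2) (s^2) s 1 s"
  shows "yang_baxter (R X Y) (R X 1) (R Y 1)"
  unfolding yang_baxter_def R_def ball_123 sum_123
  apply (simp only: Rhom_entries mult_zero_left mult_zero_right add_0_left add_0_right)
  by (intro conjI; (rule refl | algebra))

lemma yang_baxter_Rhom_IK:
  fixes s X Y :: complex
  defines "R \<equiv> Rhom (s^2) (-(s^6)) (-(s^5)) (-(s^4)) s"
  shows "yang_baxter (R X Y) (R X 1) (R Y 1)"
  unfolding yang_baxter_def R_def ball_123 sum_123
  apply (simp only: Rhom_entries mult_zero_left mult_zero_right add_0_left add_0_right)
  by (intro conjI; (rule refl | algebra))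

lemma yang_baxter_scale:
  assumes "yang_baxter R12 R13 R23"
  shows "yang_baxter (\<lambda>a a' b b'. c * R12 a a' b b') R13 R23"
proof -
  have reorder: "c * x * y * w = c * (x * y * w)" "x * y * (c * w) = c * (x * y * w)" for x y w :: complex
    by (simp_all add: ac_simps)
  have scaled: "(\<Sum>g\<in>{1,2,3}. \<Sum>g'\<in>{1,2,3}. \<Sum>j\<in>{1,2,3}. c * R12 a a' g g' * R13 g i b j * R23 g' j b' k) =
      c * (\<Sum>g\<in>{1,2,3}. \<Sum>g'\<in>{1,2,3}. \<Sum>j\<in>{1,2,3}. R12 a a' g g' * R13 g i b j * R23 g' j b' k)"
    "(\<Sum>g\<in>{1,2,3}. \<Sum>g'\<in>{1,2,3}. \<Sum>j\<in>{1,2,3}. R23 a' i g' j * R13 a j g k * (c * R12 g g' b b')) =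
      c * (\<Sum>g\<in>{1,2,3}. \<Sum>g'\<in>{1,2,3}. \<Sum>j\<in>{1,2,3}. R23 a' i g' j * R13 a j g k * R12 g g' b b')"
    for a a' i b b' k
    by (simp_all only: sum_distrib_left reorder)
  show ?thesis
    using assms unfolding yang_baxter_def scaled
    by (intro ballI arg_cong[where f = "(*) c"]) blast
qed

lemma Rloc_eq_Rhom:
  assumes "s \<noteq> 0"
  shows "Rloc q s z l = Rhom q z (z/s) (z/s^2) s (exp (2*l)) 1"
  using assms
  unfolding Rloc_def Rhom_def Rmat_def Rhom_mat_def wa_def wb_def wc_def wcb_def wd_def Let_def
  by (simp add: fun_eq_iff power_int_def field_simps power2_eq_square)

lemma Rhom_homogeneous:
  assumes "Y \<noteq> 0"
  shows "Rhom q z w1 w2 s (X/Y) 1 = (\<lambda>\<alpha> i \<beta> j. Rhom q z w1 w2 s X Y \<alpha> i \<beta> j / Y^2)"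
  using assms unfolding Rhom_def Rhom_mat_def
  by (simp add: fun_eq_iff field_simps power2_eq_square)

lemma yang_baxter_Rloc:
  assumes "s\<^sup>2 = q" and "s \<noteq> 0" and "z = q \<or> z = -(q^3)"
  shows "yang_baxter (Rloc q s z (l - m)) (Rloc q s z (l - n)) (Rloc q s z (m - n))"
proof -
  define X where "X = exp (2*(l - n))"
  define Y where "Y = exp (2*(m - n))"
  define R where "R = Rhom q z (z/s) (z/s^2) s"
  have "Y \<noteq> 0" by (simp add: Y_def)
  have "exp (2*(l - m)) = X/Y"
    by (simp add: X_def Y_def exp_diff[symmetric] algebra_simps)
  then have Rloc: "Rloc q s z (l - m) = (\<lambda>a a' b b'. 1/Y^2 * R X Y a a' b b')"
    "Rloc q s z (l - n) = R X 1" "Rloc q s z (m - n) = R Y 1"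
    using \<open>Y \<noteq> 0\<close> by (simp_all add: Rloc_eq_Rhom \<open>s \<noteq> 0\<close> Rhom_homogeneous R_def X_def Y_def)
  have "yang_baxter (R X Y) (R X 1) (R Y 1)"
    using assms(3)
  proof
    assume "z = q"
    then have "R = Rhom (s^2) (s^2) s 1 s"
      using assms(1,2) by (auto simp: R_def power2_eq_square)
    then show ?thesis by (simp add: yang_baxter_Rhom_FZ)
  next
    assume "z = -(q^3)"
    then have "R = Rhom (s^2) (-(s^6)) (-(s^5)) (-(s^4)) s"
      using assms(1,2) by (auto simp: R_def field_simps eval_nat_numeral)
    then show ?thesis by (simp add: yang_baxter_Rhom_IK)
  qed
  then show ?thesis
    unfolding Rloc by (rule yang_baxter_scale)
qed

section \<open>RTT relation\<close>

lemma finite_states: "finite (states n)"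
  unfolding states_def by (rule finite_lists_length_eq) simp

lemma states_0: "states 0 = {[]}"
  by (auto simp: states_def)

lemma sum_states_Suc:
  "(\<Sum>js\<in>states (Suc n). f js) = (\<Sum>j\<in>{1,2,3}. \<Sum>js\<in>states n. f (j # js))"
proof -
  have "states (Suc n) = (\<lambda>(j, js). j # js) ` ({1,2,3} \<times> states n)"
    by (auto simp: states_def length_Suc_conv image_iff)
  moreover have "inj_on (\<lambda>(j, js). j # js) ({1,2,3::nat} \<times> states n)"
    by (auto simp: inj_on_def)
  ultimately have "(\<Sum>js\<in>states (Suc n). f js) = (\<Sum>(j, js)\<in>{1,2,3} \<times> states n. f (j # js))"
    by (simp add: sum.reindex split_def)
  also have "\<dots> = (\<Sum>j\<in>{1,2,3}. \<Sum>js\<in>states n. f (j # js))"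
    by (rule sum.cartesian_product[symmetric])
  finally show ?thesis .
qed

definition Tmono_prod ::
    "complex \<Rightarrow> complex \<Rightarrow> complex \<Rightarrow> complex list \<Rightarrow> complex \<Rightarrow> complex \<Rightarrow>
     nat \<Rightarrow> nat \<Rightarrow> nat \<Rightarrow> nat \<Rightarrow> nat list \<Rightarrow> nat list \<Rightarrow> complex" where
  "Tmono_prod q s z mus l m a a' b b' is ks =
     (\<Sum>js\<in>states (length mus). Tmono q s z l mus a b is js * Tmono q s z m mus a' b' js ks)"

lemma Tmono_Cons_Nil: "Tmono q s z l (\<mu> # mus) a b is [] = 0"
  by (cases "is") auto

lemma Tmono_prod_Nil:
  "Tmono_prod q s z [] l m a a' b b' is ks = (if a = b \<and> a' = b' \<and> is = [] \<and> ks = [] then 1 else 0)"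
  by (simp add: Tmono_prod_def states_0)

lemma Tmono_prod_Cons_Nil:
  "Tmono_prod q s z (\<mu> # mus) l m a a' b b' [] ks = 0"
  "Tmono_prod q s z (\<mu> # mus) l m a a' b b' is [] = 0"
  by (simp_all add: Tmono_prod_def Tmono_Cons_Nil)

lemma Tmono_prod_Cons:
  "Tmono_prod q s z (\<mu> # mus) l m a a' b b' (i # is) (k # ks) =
    (\<Sum>d\<in>{1,2,3}. \<Sum>d'\<in>{1,2,3}. \<Sum>j\<in>{1,2,3}.
       Rloc q s z (l - \<mu>) a i d j * Rloc q s z (m - \<mu>) a' j d' k * Tmono_prod q s z mus l m d d' b b' is ks)"
  unfolding Tmono_prod_def
  by (simp add: sum_states_Suc sum_123 sum.distrib sum_distrib_left sum_distrib_right algebra_simps)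

lemma Tmono_prod_RTT:
  assumes ybe: "\<And>n. yang_baxter (Rloc q s z (l - m)) (Rloc q s z (l - n)) (Rloc q s z (m - n))"
    and "b \<in> {1,2,3}" "b' \<in> {1,2,3}"
  shows "a \<in> {1,2,3} \<Longrightarrow> a' \<in> {1,2,3} \<Longrightarrow> set is \<subseteq> {1,2,3} \<Longrightarrow> set ks \<subseteq> {1,2,3} \<Longrightarrow>
    (\<Sum>g\<in>{1,2,3}. \<Sum>g'\<in>{1,2,3}. Rloc q s z (l - m) a a' g g' * Tmono_prod q s z mus l m g g' b b' is ks) =
    (\<Sum>g\<in>{1,2,3}. \<Sum>g'\<in>{1,2,3}. Tmono_prod q s z mus m l a' a g' g is ks * Rloc q s z (l - m) g g' b b')"
proof (induction mus arbitrary: a a' "is" ks)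
  case Nil
  show ?case
  proof (cases "is = [] \<and> ks = []")
    case True
    have Nil_Nil: "Tmono_prod q s z [] l' m' g g' c c' is ks = (if g = c \<and> g' = c' then 1 else 0)"
      for l' m' g g' c c'
      using True by (simp add: Tmono_prod_Nil)
    have "(\<Sum>g\<in>{1,2,3}. \<Sum>g'\<in>{1,2,3}. Rloc q s z (l - m) a a' g g' * Tmono_prod q s z [] l m g g' b b' is ks) =
        Rloc q s z (l - m) a a' b b'"
      unfolding Nil_Nil sum_123 using assms(2,3) by auto
    moreover have "(\<Sum>g\<in>{1,2,3}. \<Sum>g'\<in>{1,2,3}. Tmono_prod q s z [] m l a' a g' g is ks * Rloc q s z (l - m) g g' b b') =
        Rloc q s z (l - m) a a' b b'"
      unfolding Nil_Nil sum_123 using Nil.prems(1,2) by auto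
    ultimately show ?thesis by simp
  next
    case False
    then have "Tmono_prod q s z [] l' m' g g' c c' is ks = 0" for l' m' g g' c c'
      by (auto simp: Tmono_prod_Nil)
    then show ?thesis by simp
  qed
next
  case (Cons \<mu> mus)
  show ?case
  proof (cases "is = [] \<or> ks = []")
    case True
    then show ?thesis by (auto simp: Tmono_prod_Cons_Nil)
  next
    case False
    then obtain i is' k ks' where "is = i # is'" "ks = k # ks'"
      by (auto simp: neq_Nil_conv)
    with Cons.prems have i: "i \<in> {1,2,3}" "set is' \<subseteq> {1,2,3}" and k: "k \<in> {1,2,3}" "set ks' \<subseteq> {1,2,3}"
      by auto
    let ?R0 = "Rloc q s z (l - m)"
    let ?R1 = "Rloc q s z (l - \<mu>)"
    let ?R2 = "Rloc q s z (m - \<mu>)"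
    let ?P = "\<lambda>d d'. Tmono_prod q s z mus l m d d' b b' is' ks'"
    let ?P' = "\<lambda>d d' g' g. Tmono_prod q s z mus m l d d' g' g is' ks'"
    have YB: "(\<Sum>g\<in>{1,2,3}. \<Sum>g'\<in>{1,2,3}. \<Sum>j\<in>{1,2,3}. ?R0 a a' g g' * ?R1 g i d j * ?R2 g' j d' k) =
        (\<Sum>g\<in>{1,2,3}. \<Sum>g'\<in>{1,2,3}. \<Sum>j\<in>{1,2,3}. ?R2 a' i g' j * ?R1 a j g k * ?R0 g g' d d')"
      if "d \<in> {1,2,3}" "d' \<in> {1,2,3}" for d d'
      by (rule yang_baxterD[OF ybe Cons.prems(1,2) i(1) that k(1)])
    have IH: "(\<Sum>d\<in>{1,2,3}. \<Sum>d'\<in>{1,2,3}. ?R0 g g' d d' * ?P d d') =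
        (\<Sum>d\<in>{1,2,3}. \<Sum>d'\<in>{1,2,3}. ?P' g' g d' d * ?R0 d d' b b')"
      if "g \<in> {1,2,3}" "g' \<in> {1,2,3}" for g g'
      by (rule Cons.IH[OF that i(2) k(2)])
    have "(\<Sum>g\<in>{1,2,3}. \<Sum>g'\<in>{1,2,3}. ?R0 a a' g g' * Tmono_prod q s z (\<mu> # mus) l m g g' b b' is ks)
      = (\<Sum>d\<in>{1,2,3}. \<Sum>d'\<in>{1,2,3}.
          (\<Sum>g\<in>{1,2,3}. \<Sum>g'\<in>{1,2,3}. \<Sum>j\<in>{1,2,3}. ?R0 a a' g g' * ?R1 g i d j * ?R2 g' j d' k) * ?P d d')"
      unfolding \<open>is = i # is'\<close> \<open>ks = k # ks'\<close> Tmono_prod_Cons sum_123 by algebra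
    also have "\<dots> = (\<Sum>d\<in>{1,2,3}. \<Sum>d'\<in>{1,2,3}.
          (\<Sum>g\<in>{1,2,3}. \<Sum>g'\<in>{1,2,3}. \<Sum>j\<in>{1,2,3}. ?R2 a' i g' j * ?R1 a j g k * ?R0 g g' d d') * ?P d d')"
      by (intro sum.cong refl) (simp only: YB)
    also have "\<dots> = (\<Sum>g\<in>{1,2,3}. \<Sum>g'\<in>{1,2,3}. \<Sum>j\<in>{1,2,3}. ?R2 a' i g' j * ?R1 a j g k *
          (\<Sum>d\<in>{1,2,3}. \<Sum>d'\<in>{1,2,3}. ?R0 g g' d d' * ?P d d'))"
      unfolding sum_123 by algebra
    also have "\<dots> = (\<Sum>g\<in>{1,2,3}. \<Sum>g'\<in>{1,2,3}. \<Sum>j\<in>{1,2,3}. ?R2 a' i g' j * ?R1 a j g k *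
          (\<Sum>d\<in>{1,2,3}. \<Sum>d'\<in>{1,2,3}. ?P' g' g d' d * ?R0 d d' b b'))"
      by (intro sum.cong refl) (simp only: IH)
    also have "\<dots> = (\<Sum>g\<in>{1,2,3}. \<Sum>g'\<in>{1,2,3}.
          (\<Sum>d\<in>{1,2,3}. \<Sum>d'\<in>{1,2,3}. \<Sum>j\<in>{1,2,3}. ?R2 a' i d j * ?R1 a j d' k * ?P' d d' g' g) * ?R0 g g' b b')"
      unfolding sum_123 by algebra
    also have "\<dots> = (\<Sum>g\<in>{1,2,3}. \<Sum>g'\<in>{1,2,3}. Tmono_prod q s z (\<mu> # mus) m l a' a g' g is ks * ?R0 g g' b b')"
      unfolding \<open>is = i # is'\<close> \<open>ks = k # ks'\<close> Tmono_prod_Cons ..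
    finally show ?thesis .
  qed
qed

section \<open>Commuting \<open>E\<close>-operators\<close>

lemma continuous_on_If_const:
  "continuous_on S f \<Longrightarrow> continuous_on S g \<Longrightarrow> continuous_on S (\<lambda>x. if P then f x else g x)"
  by (cases P) auto

lemma continuous_on_Rloc:
  "continuous_on S f \<Longrightarrow> continuous_on S (\<lambda>x. Rloc q s z (f x) \<alpha> i \<beta> j)"
  unfolding Rloc_def Rmat_def wa_def wb_def wc_def wcb_def wd_def Let_def
  by (intro continuous_intros continuous_on_If_const)

lemma continuous_on_Tmono:
  "continuous_on S f \<Longrightarrow> continuous_on S (\<lambda>x. Tmono q s z (f x) mus a b is js)"
proof (induction mus arbitrary: a "is" js)
  case (Cons \<mu> mus)
  then show ?case
    by (cases "is"; cases js) (auto intro!: continuous_intros continuous_on_Rloc simp: Tmono_Cons_Nil)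
qed simp

lemma continuous_on_Tmono_prod:
  "continuous_on S f \<Longrightarrow> continuous_on S g \<Longrightarrow>
    continuous_on S (\<lambda>x. Tmono_prod q s z mus (f x) (g x) a a' b b' is ks)"
  unfolding Tmono_prod_def by (intro continuous_intros continuous_on_Tmono)

lemma continuous_zero_if_exp_avoids_finite:
  fixes F :: "complex \<Rightarrow> 'a::real_normed_vector"
  assumes "continuous_on UNIV F" and "finite C" and zero: "\<And>l. exp l \<notin> C \<Longrightarrow> F l = 0"
  shows "F l = 0"
proof -
  \<comment> \<open>On the real line through \<open>l\<close>, \<open>exp\<close> takes each value at most once.\<close>
  define bad where "bad = (\<lambda>c. ln (Re (c / exp l))) ` C"
  have "t \<in> bad" if "exp (l + of_real t) \<in> C" for t
  proof -
    have "exp (l + of_real t) / exp l = of_real (exp t)"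
      by (simp add: exp_add exp_of_real)
    then have "t = ln (Re (exp (l + of_real t) / exp l))"
      by simp
    with that show ?thesis
      unfolding bad_def by blast
  qed
  moreover have "finite bad"
    unfolding bad_def using \<open>finite C\<close> by simp
  then have "eventually (\<lambda>t. t \<notin> bad) (at (0::real))"
    by (intro eventually_ball_finite[of bad, THEN eventually_mono]) (auto intro: eventually_neq_at_within)
  ultimately have "eventually (\<lambda>t. F (l + of_real t) = 0) (at (0::real))"
    by (auto elim!: eventually_mono intro: zero)
  then have "((\<lambda>t. F (l + of_real t)) \<longlongrightarrow> 0) (at 0)"
    by (rule tendsto_eventually)
  moreover have "((\<lambda>t. F (l + of_real t)) \<longlongrightarrow> F l) (at (0::real))"
    using assms(1) by (intro continuous_on_tendsto_compose[of UNIV F] tendsto_eq_intros) auto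
  ultimately show ?thesis
    using tendsto_unique[OF at_neq_bot] by metis
qed

lemma Rloc_corner:
  assumes "c \<in> {1,3}" "g \<in> {1,2,3}" "g' \<in> {1,2,3}"
  shows "Rloc q s z t c c g g' = (if g = c \<and> g' = c then wa q z t else 0)"
    and "Rloc q s z t g g' c c = (if g = c \<and> g' = c then wa q z t else 0)"
  using assms by (elim insertE emptyE; simp add: Rloc_def Rmat_def)+

lemma Tmono_prod_commute:
  assumes ybe: "\<And>l m n. yang_baxter (Rloc q s z (l - m)) (Rloc q s z (l - n)) (Rloc q s z (m - n))"
    and "set is \<subseteq> {1,2,3}" "set ks \<subseteq> {1,2,3}"
  shows "Tmono_prod q s z mus l m 1 1 3 3 is ks = Tmono_prod q s z mus m l 1 1 3 3 is ks"
proof -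
  define F where "F l' = Tmono_prod q s z mus l' m 1 1 3 3 is ks - Tmono_prod q s z mus m l' 1 1 3 3 is ks"
    for l'
  have wa_F: "wa q z (l' - m) * F l' = 0" for l'
  proof -
    have "(\<Sum>g\<in>{1,2,3}. \<Sum>g'\<in>{1,2,3}. Rloc q s z (l' - m) 1 1 g g' * Tmono_prod q s z mus l' m g g' 3 3 is ks) =
        (\<Sum>g\<in>{1,2,3}. \<Sum>g'\<in>{1,2,3}. Tmono_prod q s z mus m l' 1 1 g' g is ks * Rloc q s z (l' - m) g g' 3 3)"
      using assms(2,3) by (intro Tmono_prod_RTT ybe) auto
    then show ?thesis
      by (simp add: F_def sum_123 Rloc_corner algebra_simps)
  qed
  have "F (m + u / 2) = 0" for u
  proof (rule continuous_zero_if_exp_avoids_finite[where F = "\<lambda>u. F (m + u / 2)" and C = "{z, q^2}"])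
    show "continuous_on UNIV (\<lambda>u. F (m + u / 2))"
      unfolding F_def by (intro continuous_intros continuous_on_Tmono_prod) simp_all
    show "F (m + u / 2) = 0" if "exp u \<notin> {z, q^2}" for u
      using wa_F[of "m + u / 2"] that by (simp add: wa_def Let_def)
  qed simp
  moreover have "m + 2 * (l - m) / 2 = l"
    by (simp add: field_simps)
  ultimately have "F l = 0"
    by metis
  then show ?thesis
    by (simp add: F_def)
qed

section \<open>Frozen monodromy at the inhomogeneities\<close>

lemma Tmono_append:
  "length is1 = length m1 \<Longrightarrow> length js1 = length m1 \<Longrightarrow> a \<in> {1,2,3} \<Longrightarrow>
   Tmono q s z l (m1 @ m2) a b (is1 @ is2) (js1 @ js2) =
   (\<Sum>g\<in>{1,2,3}. Tmono q s z l m1 a g is1 js1 * Tmono q s z l m2 g b is2 js2)"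
proof (induction m1 arbitrary: a is1 js1)
  case Nil
  then show ?case by (auto simp: sum_123)
next
  case (Cons \<mu> m1)
  from Cons.prems obtain i is1' j js1' where ij: "is1 = i # is1'" "js1 = j # js1'"
    "length is1' = length m1" "length js1' = length m1"
    by (cases is1; cases js1) auto
  have "Tmono q s z l ((\<mu> # m1) @ m2) a b (is1 @ is2) (js1 @ js2)
      = (\<Sum>d\<in>{1,2,3}. Rloc q s z (l - \<mu>) a i d j *
          (\<Sum>g\<in>{1,2,3}. Tmono q s z l m1 d g is1' js1' * Tmono q s z l m2 g b is2 js2))"
    using Cons.IH ij by simp
  also have "\<dots> = (\<Sum>g\<in>{1,2,3}. (\<Sum>d\<in>{1,2,3}. Rloc q s z (l - \<mu>) a i d j * Tmono q s z l m1 d g is1' js1') *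
      Tmono q s z l m2 g b is2 js2)"
    unfolding sum_123 by algebra
  finally show ?case
    by (simp add: ij)
qed

lemma Tmono_frozen_column:
  assumes "c \<in> {1,3}"
  shows "length is = length m \<Longrightarrow> set is \<subseteq> {1,2,3} \<Longrightarrow> a \<in> {1,2,3} \<Longrightarrow>
    Tmono q s z l m a c is (replicate (length m) c) =
    (if a = c \<and> is = replicate (length m) c then (\<Prod>\<mu>\<leftarrow>m. wa q z (l - \<mu>)) else 0)"
proof (induction m arbitrary: a "is")
  case (Cons \<mu> m)
  then obtain i is' where "is = i # is'" "length is' = length m" "i \<in> {1,2,3}" "set is' \<subseteq> {1,2,3}"
    by (cases "is") auto
  have "Tmono q s z l (\<mu> # m) a c is (replicate (length (\<mu> # m)) c)
      = (\<Sum>d\<in>{1,2,3}. Rloc q s z (l - \<mu>) a i d c *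
          (if d = c \<and> is' = replicate (length m) c then (\<Prod>\<nu>\<leftarrow>m. wa q z (l - \<nu>)) else 0))"
    using Cons.IH \<open>is = i # is'\<close> \<open>length is' = length m\<close> \<open>set is' \<subseteq> {1,2,3}\<close> by simp
  also have "\<dots> = Rloc q s z (l - \<mu>) a i c c *
      (if is' = replicate (length m) c then (\<Prod>\<nu>\<leftarrow>m. wa q z (l - \<nu>)) else 0)"
    using assms by (auto simp: sum_123)
  finally show ?case
    using assms Cons.prems(3) \<open>i \<in> {1,2,3}\<close> by (auto simp: \<open>is = i # is'\<close> Rloc_corner)
qed simp

lemma weights_zero:
  "wb q z 0 = 0" "wc q z 0 = wa q z 0" "wcb q z 0 = wa q z 0"
  "\<beta> \<le> 3 \<Longrightarrow> wd q s z \<alpha> \<beta> 0 = (if \<alpha> + \<beta> = 4 then wa q z 0 else 0)"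
  by (auto simp: wa_def wb_def wc_def wcb_def wd_def Let_def algebra_simps)

lemma Rloc_zero_eq_permutation:
  assumes "\<alpha> \<in> {1,2,3}" "i \<in> {1,2,3}" "\<beta> \<in> {1,2,3}" "j \<in> {1,2,3}"
  shows "Rloc q s z 0 \<alpha> i \<beta> j = (if \<alpha> = j \<and> i = \<beta> then wa q z 0 else 0)"
  using assms by (elim insertE emptyE; simp add: Rloc_def Rmat_def weights_zero)

lemma Tmono_at_inhomogeneity:
  assumes "length is1 = length m1" "length is2 = length m2"
    and "i \<in> {1,2,3}" "set is1 \<subseteq> {1,2,3}" "set is2 \<subseteq> {1,2,3}"
  shows "Tmono q s z \<mu> (m1 @ \<mu> # m2) 1 3 (is1 @ i # is2) (replicate (length m1) 1 @ 1 # replicate (length m2) 3) =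
    (if is1 = replicate (length m1) 1 \<and> i = 3 \<and> is2 = replicate (length m2) 3
     then (\<Prod>\<nu>\<leftarrow>m1 @ \<mu> # m2. wa q z (\<mu> - \<nu>)) else 0)"
proof -
  let ?ones = "replicate (length m1) (1::nat)"
  let ?threes = "replicate (length m2) (3::nat)"
  have middle: "Tmono q s z \<mu> (\<mu> # m2) g 3 (i # is2) (1 # ?threes) =
      (if g = 1 then wa q z 0 * Tmono q s z \<mu> m2 i 3 is2 ?threes else 0)" if "g \<in> {1,2,3}" for g
    using that assms(3) by (auto simp: sum_123 Rloc_zero_eq_permutation)
  have "Tmono q s z \<mu> (m1 @ \<mu> # m2) 1 3 (is1 @ i # is2) (?ones @ 1 # ?threes) =
      (\<Sum>g\<in>{1,2,3}. Tmono q s z \<mu> m1 1 g is1 ?ones * Tmono q s z \<mu> (\<mu> # m2) g 3 (i # is2) (1 # ?threes))"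
    using assms(1) by (intro Tmono_append) auto
  also have "\<dots> = (\<Sum>g\<in>{1,2,3}. Tmono q s z \<mu> m1 1 g is1 ?ones *
      (if g = 1 then wa q z 0 * Tmono q s z \<mu> m2 i 3 is2 ?threes else 0))"
    by (intro sum.cong refl) (simp only: middle)
  also have "\<dots> = Tmono q s z \<mu> m1 1 1 is1 ?ones * (wa q z 0 * Tmono q s z \<mu> m2 i 3 is2 ?threes)"
    by (simp add: sum_123)
  finally show ?thesis
    using Tmono_frozen_column[of 1 is1 m1 1] Tmono_frozen_column[of 3 is2 m2 i] assms by auto
qed

section \<open>The partition function\<close>

definition ket :: "nat list \<Rightarrow> nat list \<Rightarrow> complex" where
  "ket w = (\<lambda>js. if js = w then 1 else 0)"

text \<open>Off the basis states \<open>applyE\<close> reads \<open>Rloc\<close> at indices outside \<open>{1,2,3}\<close>, where it is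
  junk; cutting the result down to the states makes the \<open>E\<close>-operators commute as functions.\<close>
definition applyE_states ::
    "complex \<Rightarrow> complex \<Rightarrow> complex \<Rightarrow> complex list \<Rightarrow> complex \<Rightarrow> (nat list \<Rightarrow> complex) \<Rightarrow> nat list \<Rightarrow> complex" where
  "applyE_states q s z mus l v = (\<lambda>is. if is \<in> states (length mus) then applyE q s z mus l v is else 0)"

lemma applyE_states_apply:
  "applyE_states q s z mus l v is = (if is \<in> states (length mus) then applyE q s z mus l v is else 0)"
  by (simp add: applyE_states_def)

lemma applyE_cong:
  "(\<And>js. js \<in> states (length mus) \<Longrightarrow> v js = w js) \<Longrightarrow> applyE q s z mus l v = applyE q s z mus l w"
  unfolding applyE_def by (intro ext sum.cong) auto

lemma foldl_applyE_eq_fold_applyE_states: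
  assumes "\<And>js. js \<in> states (length mus) \<Longrightarrow> v js = w js" and "js \<in> states (length mus)"
  shows "foldl (\<lambda>v l. applyE q s z mus l v) v lams js = fold (applyE_states q s z mus) lams w js"
  using assms
proof (induction lams arbitrary: v w)
  case (Cons l lams)
  have "applyE q s z mus l v js = applyE_states q s z mus l w js" if "js \<in> states (length mus)" for js
    using that applyE_cong[of mus v w] Cons.prems(1) by (simp add: applyE_states_def)
  then show ?case
    using Cons.IH Cons.prems(2) by simp
qed simp

lemma applyE_applyE:
  "applyE q s z mus l (applyE q s z mus m v) is =
    (\<Sum>ks\<in>states (length mus). Tmono_prod q s z mus l m 1 1 3 3 is ks * v ks)"
proof -
  have "applyE q s z mus l (applyE q s z mus m v) is =
      (\<Sum>js\<in>states (length mus). \<Sum>ks\<in>states (length mus). Eop q s z mus l is js * (Eop q s z mus m js ks * v ks))"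
    by (simp add: applyE_def sum_distrib_left)
  also have "\<dots> = (\<Sum>ks\<in>states (length mus). Tmono_prod q s z mus l m 1 1 3 3 is ks * v ks)"
    by (subst sum.swap) (simp add: Tmono_prod_def Eop_def sum_distrib_right mult.assoc)
  finally show ?thesis .
qed

lemma applyE_states_commute:
  assumes "\<And>l m n. yang_baxter (Rloc q s z (l - m)) (Rloc q s z (l - n)) (Rloc q s z (m - n))"
  shows "applyE_states q s z mus l \<circ> applyE_states q s z mus m = applyE_states q s z mus m \<circ> applyE_states q s z mus l"
proof -
  have "applyE q s z mus l (applyE_states q s z mus m v) = applyE q s z mus l (applyE q s z mus m v)" for l m v
    by (rule applyE_cong) (simp add: applyE_states_def)
  moreover have "applyE q s z mus l (applyE q s z mus m v) is = applyE q s z mus m (applyE q s z mus l v) is"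
    if "is \<in> states (length mus)" for "is" v
    unfolding applyE_applyE
    using that assms by (intro sum.cong refl arg_cong2[where f = "(*)"] Tmono_prod_commute) (auto simp: states_def)
  ultimately show ?thesis
    by (simp add: fun_eq_iff applyE_states_apply)
qed

lemma applyE_states_scale:
  "applyE_states q s z mus l (\<lambda>js. c * v js) = (\<lambda>js. c * applyE_states q s z mus l v js)"
  by (simp add: applyE_states_def applyE_def fun_eq_iff sum_distrib_left ac_simps)

lemma applyE_states_at_inhomogeneity:
  assumes "mus = m1 @ \<mu> # m2"
  shows "applyE_states q s z mus \<mu> (ket (replicate (Suc (length m1)) 1 @ replicate (length m2) 3)) =
    (\<lambda>js. (\<Prod>\<nu>\<leftarrow>mus. wa q z (\<mu> - \<nu>)) * ket (replicate (length m1) 1 @ replicate (Suc (length m2)) 3) js)"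
proof
  fix "is"
  let ?w = "replicate (length m1) 1 @ 1 # replicate (length m2) (3::nat)"
  have w: "replicate (Suc (length m1)) 1 @ replicate (length m2) 3 = ?w"
    by (simp add: replicate_append_same[symmetric])
  have "?w \<in> states (length mus)"
    using assms by (auto simp: states_def)
  then have apply_ket: "applyE q s z mus \<mu> (ket ?w) is = Eop q s z mus \<mu> is ?w"
    by (simp add: applyE_def ket_def finite_states if_distrib[of "(*) _"] sum.delta' cong: if_cong)
  show "applyE_states q s z mus \<mu> (ket (replicate (Suc (length m1)) 1 @ replicate (length m2) 3)) is =
    (\<Prod>\<nu>\<leftarrow>mus. wa q z (\<mu> - \<nu>)) * ket (replicate (length m1) 1 @ replicate (Suc (length m2)) 3) is"
  proof (cases "is \<in> states (length mus)")
    case True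
    then have "length is = length m1 + Suc (length m2)" and "set is \<subseteq> {1,2,3}"
      using assms by (simp_all add: states_def)
    define is1 i is2 where "is1 = take (length m1) is" and "i = is ! length m1"
      and "is2 = drop (Suc (length m1)) is"
    have "is = is1 @ i # is2" and "length is1 = length m1" and "length is2 = length m2"
      using \<open>length is = length m1 + Suc (length m2)\<close>
      by (simp_all add: is1_def i_def is2_def id_take_nth_drop)
    moreover have "i \<in> {1,2,3}" "set is1 \<subseteq> {1,2,3}" "set is2 \<subseteq> {1,2,3}"
      using \<open>set is \<subseteq> {1,2,3}\<close> \<open>is = is1 @ i # is2\<close> by auto
    ultimately have "Eop q s z mus \<mu> is ?w =
        (if is1 = replicate (length m1) 1 \<and> i = 3 \<and> is2 = replicate (length m2) 3
         then (\<Prod>\<nu>\<leftarrow>mus. wa q z (\<mu> - \<nu>)) else 0)"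
      unfolding Eop_def assms by (simp only: Tmono_at_inhomogeneity)
    with True \<open>is = is1 @ i # is2\<close> \<open>length is1 = length m1\<close> show ?thesis
      unfolding w applyE_states_apply apply_ket
      by (auto simp: ket_def append_eq_append_conv)
  next
    case False
    then show ?thesis
      using assms by (auto simp: applyE_states_def ket_def states_def)
  qed
qed

lemma fold_applyE_states_frozen:
  assumes "mus = m1 @ m2"
  shows "fold (applyE_states q s z mus) (rev m2) (ket (replicate (length mus) 1)) =
    (\<lambda>js. (\<Prod>\<mu>\<leftarrow>m2. \<Prod>\<nu>\<leftarrow>mus. wa q z (\<mu> - \<nu>)) * ket (replicate (length m1) 1 @ replicate (length m2) 3) js)"
  using assms
proof (induction m2 arbitrary: m1)
  case Nil
  then show ?case by simp
next
  case (Cons \<mu> m2)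
  have "fold (applyE_states q s z mus) (rev (\<mu> # m2)) (ket (replicate (length mus) 1)) =
      applyE_states q s z mus \<mu> (\<lambda>js. (\<Prod>\<mu>\<leftarrow>m2. \<Prod>\<nu>\<leftarrow>mus. wa q z (\<mu> - \<nu>)) *
        ket (replicate (Suc (length m1)) 1 @ replicate (length m2) 3) js)"
    using Cons.IH[of "m1 @ [\<mu>]"] Cons.prems by simp
  also have "\<dots> = (\<lambda>js. (\<Prod>\<mu>\<leftarrow>m2. \<Prod>\<nu>\<leftarrow>mus. wa q z (\<mu> - \<nu>)) *
        ((\<Prod>\<nu>\<leftarrow>mus. wa q z (\<mu> - \<nu>)) * ket (replicate (length m1) 1 @ replicate (Suc (length m2)) 3) js))"
    by (simp only: applyE_states_scale applyE_states_at_inhomogeneity[OF Cons.prems])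
  also have "\<dots> = (\<lambda>js. (\<Prod>\<mu>'\<leftarrow>\<mu> # m2. \<Prod>\<nu>\<leftarrow>mus. wa q z (\<mu>' - \<nu>)) *
        ket (replicate (length m1) 1 @ replicate (length (\<mu> # m2)) 3) js)"
    by (simp add: ac_simps)
  finally show ?case .
qed

theorem lemma2p7:
  fixes q s z :: complex and mus :: "complex list"
  assumes "q \<noteq> 0" and "s ^ 2 = q" and "z = q \<or> z = - (q ^ 3)" and "length mus \<ge> 1"
  shows "Zpf q s z mus mus =
    (\<Prod>i<length mus. \<Prod>j<length mus. wa q z (mus ! i - mus ! j))"
proof -
  have "s \<noteq> 0"
    using assms(1,2) by auto
  have ybe: "yang_baxter (Rloc q s z (l - m)) (Rloc q s z (l - n)) (Rloc q s z (m - n))" for l m n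
    by (rule yang_baxter_Rloc[OF assms(2) \<open>s \<noteq> 0\<close> assms(3)])
  let ?E = "applyE_states q s z mus"
  have threes: "replicate (length mus) 3 \<in> states (length mus)"
    by (auto simp: states_def)
  have "Zpf q s z mus mus = fold ?E mus (ket (replicate (length mus) 1)) (replicate (length mus) 3)"
    unfolding Zpf_def ket_def by (rule foldl_applyE_eq_fold_applyE_states[OF _ threes]) simp
  also have "\<dots> = fold ?E (rev mus) (ket (replicate (length mus) 1)) (replicate (length mus) 3)"
    using fold_rev[of mus ?E] applyE_states_commute[OF ybe] by metis
  also have "\<dots> = (\<Prod>\<mu>\<leftarrow>mus. \<Prod>\<nu>\<leftarrow>mus. wa q z (\<mu> - \<nu>))"
    using fold_applyE_states_frozen[of mus "[]" mus q s z] by (simp add: ket_def)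
  also have "\<dots> = (\<Prod>i<length mus. \<Prod>j<length mus. wa q z (mus ! i - mus ! j))"
    by (simp add: prod.list_conv_set_nth atLeast0LessThan)
  finally show ?thesis .
qed

end
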